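(* Let $-3<c<-2$, $k=k(c)$, and put $F_c(z)=D_c(2z)=1+\sum_{n\ge1}\frac{z^n}{r_1(c)\cdots r_n(c)}$ and $M_c(z)=\frac{z^k}{r_1(c)\cdots r_k(c)}$. Then for every $z$ with $4r_k(c)<|z|<9r_k(c)$, $$\left|1-\frac{F_c(z)}{M_c(z)}\right|\le\frac23 .$$
   Context: For real $c<-2$ let $f_c(z)=z^2+c$ and $r_n(c)=f_c^{\circ n}(0)$, so $r_1(c)=c$ and $r_{n+1}(c)=r_n(c)^2+c$; $D_c(\lambda)=1+\sum_{n=1}^{\infty}\frac{\lambda^n}{2^n r_1(c)\cdots r_n(c)}$. For $-3<c<-2$, $k(c)$ denotes the smallest positive integer $k$ such that $r_{k+1}(c)/r_k(c)\ge 36$. *)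

theory Defs
  imports Complex_Main
begin

text \<open>r_n(c) = f_c^n(0), with r_1(c) = c and r_(n+1)(c) = r_n(c)^2 + c.
  We set r_0(c) = 0 (the 0-th iterate), consistent with r_1 = 0^2 + c.\<close>
fun r :: "nat \<Rightarrow> real \<Rightarrow> real" where
  "r 0 c = 0"
| "r (Suc n) c = (r n c)^2 + c"

definition D :: "real \<Rightarrow> complex \<Rightarrow> complex" where
  "D c lam = 1 + (\<Sum>n. lam ^ (Suc n) /
      complex_of_real (2 ^ (Suc n) * (\<Prod>i\<in>{1..Suc n}. r i c)))"

definition kc :: "real \<Rightarrow> nat" where
  "kc c = (LEAST k. 0 < k \<and> r (k+1) c / r k c \<ge> 36)"

definition F :: "real \<Rightarrow> complex \<Rightarrow> complex" where
  "F c z = D c (2 * z)"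

definition M :: "real \<Rightarrow> complex \<Rightarrow> complex" where
  "M c z = z ^ (kc c) / complex_of_real (\<Prod>i\<in>{1..kc c}. r i c)"

end

theory Submission
  imports Defs
begin

text \<open>For c < -2 the critical orbit increases from r_2 > 2 on by at least r_3 - r_2 > 0 per
  step, so k = k(c) \<ge> 2 exists and r_(k+1) \<ge> 36 r_k. The terms z^n / (r_1 \<cdots> r_n) of F_c have
  consecutive ratios z / r_(n+1). For 4 r_k < |z| < 9 r_k this ratio has modulus at most 1/4 from
  the k-th term on (as r_(n+1) \<ge> 36 r_k), and its inverse has modulus at most 1/4 before it (as
  |r_(n+1)| \<le> r_k). So the k-th term M_c dominates: the terms after it and those before it are
  bounded by geometric series of ratio 1/4, each contributing at most |M_c|/3.\<close>

lemma sums_geometric_Suc: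
  fixes q :: "'a::real_normed_field" assumes "norm q < 1"
  shows "(\<lambda>n. q ^ Suc n) sums (q / (1 - q))"
proof -
  have "q \<noteq> 1" using assms by auto
  then show ?thesis
    using sums_mult[OF geometric_sums[OF assms], of q] by (simp add: field_simps)
qed

lemma norm_le_geometric_from:
  fixes b :: "nat \<Rightarrow> 'a::real_normed_vector"
  assumes "0 \<le> q" and "\<And>n. k \<le> n \<Longrightarrow> norm (b (Suc n)) \<le> q * norm (b n)"
  shows "norm (b (k + j)) \<le> q ^ j * norm (b k)"
proof (induction j)
  case (Suc j)
  have "norm (b (k + Suc j)) \<le> q * norm (b (k + j))" using assms(2)[of "k + j"] by simp
  also have "\<dots> \<le> q * (q ^ j * norm (b k))" using Suc assms(1) by (rule mult_left_mono)
  finally show ?case by (simp add: mult.assoc)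
qed simp

lemma norm_le_geometric_upto:
  fixes b :: "nat \<Rightarrow> 'a::real_normed_vector"
  assumes "0 \<le> q" and "\<And>n. n < k \<Longrightarrow> norm (b n) \<le> q * norm (b (Suc n))" and "j \<le> k"
  shows "norm (b (k - j)) \<le> q ^ j * norm (b k)"
  using assms(3)
proof (induction j)
  case (Suc j)
  have "k - Suc j < k" and "Suc (k - Suc j) = k - j" using Suc.prems by auto
  then have "norm (b (k - Suc j)) \<le> q * norm (b (k - j))" using assms(2) by metis
  also have "\<dots> \<le> q * (q ^ j * norm (b k))" using Suc assms(1) by (intro mult_left_mono) simp_all
  finally show ?case by (simp add: mult.assoc)
qed simp

lemma
  fixes b :: "nat \<Rightarrow> 'a::banach"
  assumes q: "0 \<le> q" "q < 1"
    and decay_after: "\<And>n. k \<le> n \<Longrightarrow> norm (b (Suc n)) \<le> q * norm (b n)"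
    and decay_before: "\<And>n. n < k \<Longrightarrow> norm (b n) \<le> q * norm (b (Suc n))"
  shows summable_geometric_peak: "summable b"
    and norm_suminf_minus_peak_le: "norm (suminf b - b k) \<le> 2 * q / (1 - q) * norm (b k)"
proof -
  have geo: "(\<lambda>n. q ^ Suc n * norm (b k)) sums (q / (1 - q) * norm (b k))"
    using sums_mult2[OF sums_geometric_Suc[of q]] q by simp
  have tail: "norm (b (n + Suc k)) \<le> q ^ Suc n * norm (b k)" for n
    using norm_le_geometric_from[of q k b "Suc n", OF q(1) decay_after] by (simp add: add.commute)
  have "summable (\<lambda>n. b (n + Suc k))"
    by (rule summable_comparison_test'[OF sums_summable[OF geo] tail])
  then show sb: "summable b" by (simp only: summable_iff_shift)
  have tail_bound: "norm (\<Sum>n. b (n + Suc k)) \<le> q / (1 - q) * norm (b k)"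
    using norm_suminf_le[OF tail sums_summable[OF geo]] sums_unique[OF geo] by simp
  have head_bound: "norm (\<Sum>i<k. b i) \<le> q / (1 - q) * norm (b k)"
  proof -
    have "norm (\<Sum>i<k. b i) \<le> (\<Sum>i<k. q ^ (k - i) * norm (b k))"
    proof (rule sum_norm_le)
      fix i assume "i \<in> {..<k}"
      then show "norm (b i) \<le> q ^ (k - i) * norm (b k)"
        using norm_le_geometric_upto[of q k b "k - i", OF q(1) decay_before] by simp
    qed
    also have "\<dots> = (\<Sum>i<k. q ^ Suc i * norm (b k))"
      by (subst sum.nat_diff_reindex[symmetric]) (intro sum.cong, auto simp: Suc_diff_Suc)
    also have "\<dots> \<le> q / (1 - q) * norm (b k)"
      using sum_le_suminf[OF sums_summable[OF geo], of "{..<k}"] sums_unique[OF geo] q by simp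
    finally show ?thesis .
  qed
  have "norm (suminf b - b k) = norm ((\<Sum>n. b (n + Suc k)) + (\<Sum>i<k. b i))"
    using suminf_split_initial_segment[OF sb, of "Suc k"] by simp
  also have "\<dots> \<le> norm (\<Sum>n. b (n + Suc k)) + norm (\<Sum>i<k. b i)"
    by (rule norm_triangle_ineq)
  also have "\<dots> \<le> q / (1 - q) * norm (b k) + q / (1 - q) * norm (b k)"
    using tail_bound head_bound by (rule add_mono)
  finally show "norm (suminf b - b k) \<le> 2 * q / (1 - q) * norm (b k)"
    by simp
qed

lemma r_two: "r 2 c = c^2 + c"
  by (simp add: numeral_2_eq_2)

lemma r_two_gt_two:
  fixes c :: real assumes "c < -2" shows "2 < r 2 c"
proof -
  have "0 < (c + 2) * (c - 1)" using assms by (intro mult_neg_neg) auto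
  then show ?thesis by (simp add: r_two power2_eq_square algebra_simps)
qed

lemma r_first_increment_pos:
  fixes c :: real assumes "c < -2" shows "0 < (r 2 c)^2 - r 2 c + c"
proof -
  have "(r 2 c)^2 - r 2 c + c = c^3 * (c + 2)"
    by (simp add: r_two power2_eq_square power3_eq_cube algebra_simps)
  moreover have "c^3 < 0" using assms by simp
  ultimately show ?thesis using assms by (simp add: mult_neg_neg)
qed

lemma square_minus_self_mono:
  fixes x y :: real assumes "y \<le> x" and "1 \<le> x + y"
  shows "y^2 - y \<le> x^2 - x"
proof -
  have "0 \<le> (x - y) * (x + y - 1)" using assms by (intro mult_nonneg_nonneg) auto
  then show ?thesis by (simp add: power2_eq_square algebra_simps)
qed

text \<open>(r_2)^2 - r_2 + c = r_3 - r_2; since x^2 - x is increasing for x \<ge> 1/2, every step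
  from a point above r_2 adds at least that much.\<close>
lemma r_Suc_ge_if_ge_r_two:
  fixes c :: real assumes "c < -2" and "r 2 c \<le> r n c"
  shows "r n c + ((r 2 c)^2 - r 2 c + c) \<le> r (Suc n) c"
  using square_minus_self_mono[OF assms(2)] r_two_gt_two[OF assms(1)] assms(2) by simp

lemma r_ge_r_two:
  fixes c :: real assumes "c < -2" and "2 \<le> n"
  shows "r 2 c \<le> r n c"
  using assms(2)
proof (induction n rule: dec_induct)
  case (step n)
  then show ?case
    using r_Suc_ge_if_ge_r_two[OF assms(1) step.IH] r_first_increment_pos[OF assms(1)]
    by linarith
qed simp

lemma r_Suc_ge:
  fixes c :: real assumes "c < -2" and "2 \<le> n"
  shows "r n c + ((r 2 c)^2 - r 2 c + c) \<le> r (Suc n) c"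
  using r_Suc_ge_if_ge_r_two[OF assms(1) r_ge_r_two[OF assms]] .

lemma r_mono:
  fixes c :: real assumes "c < -2" and "2 \<le> i" and "i \<le> j"
  shows "r i c \<le> r j c"
  using assms(3)
proof (induction j rule: dec_induct)
  case (step j)
  then show ?case
    using r_Suc_ge[OF assms(1), of j] assms(2) r_first_increment_pos[OF assms(1)] by simp
qed simp

lemma r_ge_linear:
  fixes c :: real assumes "c < -2"
  shows "r 2 c + real n * ((r 2 c)^2 - r 2 c + c) \<le> r (n + 2) c"
proof (induction n)
  case (Suc n)
  then show ?case using r_Suc_ge[OF assms, of "n + 2"] by (simp add: algebra_simps del: r.simps)
qed (simp add: numeral_2_eq_2 del: r.simps)

lemma r_pos:
  fixes c :: real assumes "c < -2" and "2 \<le> n"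
  shows "0 < r n c"
  using r_ge_r_two[OF assms] r_two_gt_two[OF assms(1)] by simp

lemma r_nonzero:
  fixes c :: real assumes "c < -2" and "1 \<le> n"
  shows "r n c \<noteq> 0"
  using assms r_pos[OF assms(1), of n] by (cases "n = 1") auto

lemma abs_r_le:
  fixes c :: real assumes "c < -2" and "1 \<le> i" and "i \<le> j" and "2 \<le> j"
  shows "\<bar>r i c\<bar> \<le> r j c"
proof (cases "i = 1")
  case True
  have "0 < c * (c + 2)" using assms(1) by (intro mult_neg_neg) auto
  then have "-c < r 2 c" by (simp add: r_two power2_eq_square algebra_simps)
  then show ?thesis using True assms r_mono[OF assms(1) order.refl assms(4)] by simp
next
  case False
  then show ?thesis using assms r_mono[OF assms(1), of i j] r_pos[OF assms(1), of i] by simp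
qed

lemma ex_escape_ratio_ge_36:
  fixes c :: real assumes "c < -2"
  shows "\<exists>k. 0 < k \<and> 36 \<le> r (k + 1) c / r k c"
proof -
  have "0 < (r 2 c)^2 - r 2 c + c" by (rule r_first_increment_pos[OF assms])
  then obtain n :: nat where "36 - c < real n * ((r 2 c)^2 - r 2 c + c)"
    by (metis reals_Archimedean3)
  then have large: "36 - c \<le> r (n + 2) c"
    using r_ge_linear[OF assms, of n] r_two_gt_two[OF assms] by simp
  define x where "x = r (n + 2) c"
  have x36: "36 - c \<le> x" using large by (simp only: x_def)
  then have "1 * (x - 36) \<le> x * (x - 36)"
    using assms by (intro mult_right_mono) auto
  then have "36 * x \<le> x^2 + c"
    using x36 by (simp add: power2_eq_square algebra_simps)
  also have "x^2 + c = r (Suc (n + 2)) c" unfolding x_def by (rule r.simps(2)[symmetric])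
  finally have "36 * r (n + 2) c \<le> r (n + 2 + 1) c" by (simp only: x_def Suc_eq_plus1)
  then show ?thesis
    using large assms by (intro exI[of _ "n + 2"]) (simp add: pos_le_divide_eq del: r.simps)
qed

lemma kc_spec:
  fixes c :: real assumes "c < -2"
  shows "0 < kc c" and "36 \<le> r (kc c + 1) c / r (kc c) c"
  using LeastI_ex[OF ex_escape_ratio_ge_36[OF assms]] unfolding kc_def by auto

lemma kc_ge_two:
  fixes c :: real assumes "c < -2"
  shows "2 \<le> kc c"
proof (rule ccontr)
  assume "\<not> 2 \<le> kc c"
  then have "kc c = 1" using kc_spec(1)[OF assms] by simp
  then have "r (kc c + 1) c / r (kc c) c = c + 1"
    using assms by (simp add: numeral_2_eq_2 power2_eq_square field_simps)
  then show False using kc_spec(2)[OF assms] assms by simp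
qed

lemma r_Suc_kc_ge:
  fixes c :: real assumes "c < -2"
  shows "36 * r (kc c) c \<le> r (Suc (kc c)) c"
  using kc_spec(2)[OF assms] r_pos[OF assms kc_ge_two[OF assms]] by (simp add: pos_le_divide_eq)

definition F_term :: "real \<Rightarrow> complex \<Rightarrow> nat \<Rightarrow> complex" where
  "F_term c z n = z ^ n / complex_of_real (\<Prod>i\<in>{1..n}. r i c)"

lemma F_eq_suminf_F_term:
  assumes "summable (F_term c z)"
  shows "F c z = suminf (F_term c z)"
proof -
  have "(2 * z) ^ Suc n / complex_of_real (2 ^ Suc n * (\<Prod>i\<in>{1..Suc n}. r i c))
      = F_term c z (Suc n)" for n
    by (simp add: F_term_def power_mult_distrib)
  then show ?thesis
    using suminf_split_head[OF assms] by (simp add: F_def D_def F_term_def)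
qed

lemma M_eq_F_term: "M c z = F_term c z (kc c)"
  by (simp add: M_def F_term_def)

lemma norm_F_term_Suc:
  "norm (F_term c z (Suc n)) = norm (F_term c z n) * (cmod z / \<bar>r (Suc n) c\<bar>)"
  by (simp add: F_term_def norm_mult norm_divide del: r.simps)

lemma F_term_nonzero:
  assumes "c < -2" and "z \<noteq> 0"
  shows "F_term c z n \<noteq> 0"
  using assms r_nonzero[OF assms(1)] by (simp add: F_term_def del: r.simps)

lemma norm_F_term_Suc_le_after_kc:
  fixes c :: real
  assumes "c < -2" and "cmod z \<le> 9 * r (kc c) c" and "kc c \<le> n"
  shows "norm (F_term c z (Suc n)) \<le> 1/4 * norm (F_term c z n)"
proof -
  have "36 * r (kc c) c \<le> r (Suc n) c"
    using r_Suc_kc_ge[OF assms(1)] r_mono[OF assms(1), of "Suc (kc c)" "Suc n"]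
      kc_ge_two[OF assms(1)] assms(3) by simp
  then have "cmod z / \<bar>r (Suc n) c\<bar> \<le> 1/4"
    using assms(2) r_pos[OF assms(1) kc_ge_two[OF assms(1)]] by (simp add: field_simps del: r.simps)
  then have "norm (F_term c z n) * (cmod z / \<bar>r (Suc n) c\<bar>) \<le> norm (F_term c z n) * (1/4)"
    by (rule mult_left_mono) simp
  then show ?thesis unfolding norm_F_term_Suc by (simp only: mult.commute)
qed

lemma norm_F_term_le_before_kc:
  fixes c :: real
  assumes "c < -2" and "4 * r (kc c) c \<le> cmod z" and "n < kc c"
  shows "norm (F_term c z n) \<le> 1/4 * norm (F_term c z (Suc n))"
proof -
  have "\<bar>r (Suc n) c\<bar> \<le> r (kc c) c"
    using abs_r_le[OF assms(1), of "Suc n" "kc c"] kc_ge_two[OF assms(1)] assms(3)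
    by (simp del: r.simps)
  then have "4 * \<bar>r (Suc n) c\<bar> * norm (F_term c z n) \<le> cmod z * norm (F_term c z n)"
    using assms(2) by (intro mult_right_mono) simp_all
  moreover have "r (Suc n) c \<noteq> 0"
    using r_nonzero[OF assms(1), of "Suc n"] by (simp del: r.simps)
  moreover have "z \<noteq> 0"
    using r_pos[OF assms(1) kc_ge_two[OF assms(1)]] assms(2) by auto
  ultimately show ?thesis
    unfolding norm_F_term_Suc by (simp add: field_simps del: r.simps)
qed

theorem mainTheorem7:
  fixes c :: real and z :: complex
  assumes "-3 < c" and "c < -2"
    and "4 * r (kc c) c < cmod z" and "cmod z < 9 * r (kc c) c"
  shows "cmod (1 - F c z / M c z) \<le> 2/3"
proof -
  define a where "a = F_term c z"
  have after: "norm (a (Suc n)) \<le> 1/4 * norm (a n)" if "kc c \<le> n" for n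
    using norm_F_term_Suc_le_after_kc[OF assms(2) _ that] assms(4) by (simp add: a_def)
  have before: "norm (a n) \<le> 1/4 * norm (a (Suc n))" if "n < kc c" for n
    using norm_F_term_le_before_kc[OF assms(2) _ that] assms(3) by (simp add: a_def)
  have "summable a" and bound: "norm (suminf a - a (kc c)) \<le> 2/3 * norm (a (kc c))"
    using summable_geometric_peak[of "1/4" "kc c" a] norm_suminf_minus_peak_le[of "1/4" "kc c" a]
      after before by auto
  then have FM: "F c z / M c z = suminf a / a (kc c)"
    by (simp add: F_eq_suminf_F_term M_eq_F_term a_def)
  have "z \<noteq> 0" using assms(3) r_pos[OF assms(2) kc_ge_two[OF assms(2)]] by auto
  then have "a (kc c) \<noteq> 0" unfolding a_def by (rule F_term_nonzero[OF assms(2)])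
  then have "1 - F c z / M c z = - ((suminf a - a (kc c)) / a (kc c))"
    unfolding FM by (simp add: field_simps)
  then have "cmod (1 - F c z / M c z) = norm (suminf a - a (kc c)) / norm (a (kc c))"
    by (simp add: norm_divide)
  also have "\<dots> \<le> 2/3" using bound \<open>a (kc c) \<noteq> 0\<close> by (simp add: divide_le_eq)
  finally show ?thesis .
qed

end
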